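(* Let $k=(k_1,k_2)\in\mathfrak{h}_\mathbb{C}\otimes\mathbb{C}^2$. The operator $D_k$, with domain $\mathrm{Dom}\,D_k\subseteq\mathcal{B}(\mathfrak{H})$, is closable as an operator from $\mathcal{B}(\mathfrak{H})$ to $\mathcal{B}(\mathfrak{H})$ with respect to the weak operator topology; that is, if $(B_n)\subseteq\mathrm{Dom}\,D_k$ with $B_n\to0$ and $D_kB_n\to\beta\in\mathcal{B}(\mathfrak{H})$ weakly, then $\beta=0$.
   Context: $\mathfrak{h}$ is a real separable Hilbert space, $\mathfrak{h}_\mathbb{C}$ its complexification (inner products antilinear in the first argument), with conjugation $\overline{h_1+ih_2}=h_1-ih_2$. $\mathfrak{H}=\Gamma_s(\mathfrak{h}_\mathbb{C})$ is the symmetric Fock space with exponential vectors $\mathcal{E}(k)=\sum_{n\ge0}k^{\otimes n}/\sqrt{n!}$ (total in $\mathfrak{H}$). For $h\in\mathfrak{h}_\mathbb{C}$, $a(h),a^+(h)$ are annihilation/creation operators ($a(h)\mathcal{E}(g)=\langle h,g\rangle\mathcal{E}(g)$, $a^+(h)=a(h)^*$), $Q(h)=a(\overline h)+a^+(h)$, $P(h)=i(a(\overline h)-a^+(h))$. Convention: an expression $\sum_jX_jB_jY_j$, with $X_j,Y_j$ operators defined on exponential vectors having adjoints defined there and $B_j$ bounded, defines a bounded operator $M$ if $\langle\mathcal{E}(f),M\mathcal{E}(g)\rangle=\sum_j\langle X_j^*\mathcal{E}(f),B_jY_j\mathcal{E}(g)\rangle$ for all $f,g\in\mathfrak{h}_\mathbb{C}$.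 For $k=(k_1,k_2)\in\mathfrak{h}_\mathbb{C}\otimes\mathbb{C}^2$, $\mathrm{Dom}\,D_k$ is the set of $B\in\mathcal{B}(\mathfrak{H})$ such that $\frac i2[Q(k_1)-P(k_2),B]$ defines a bounded operator on $\mathfrak{H}$, and $D_kB:=\frac i2[Q(k_1)-P(k_2),B]$. *)

theory Defs
  imports "HOL-Analysis.Analysis"
begin

text \<open>Together with
  the class complete_space this gives a complex Hilbert space.\<close>

class complex_inner = real_normed_vector +
  fixes scaleC :: "complex \<Rightarrow> 'a \<Rightarrow> 'a"
    and cinner :: "'a \<Rightarrow> 'a \<Rightarrow> complex"
  assumes scaleC_add_right: "scaleC a (x + y) = scaleC a x + scaleC a y"
    and scaleC_add_left: "scaleC (a + b) x = scaleC a x + scaleC b x"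
    and scaleC_scaleC: "scaleC a (scaleC b x) = scaleC (a * b) x"
    and scaleC_one: "scaleC 1 x = x"
    and scaleR_scaleC: "scaleR r x = scaleC (complex_of_real r) x"
    and cinner_commute: "cinner x y = cnj (cinner y x)"
    and cinner_add_right: "cinner x (y + z) = cinner x y + cinner x z"
    and cinner_scaleC_right: "cinner x (scaleC a y) = a * cinner x y"
    and cinner_self_norm: "cinner x x = complex_of_real ((norm x)\<^sup>2)"

definition cspan :: "'a::complex_inner set \<Rightarrow> 'a set" where
  "cspan S = {x. \<exists>F c. finite F \<and> F \<subseteq> S \<and> x = (\<Sum>v\<in>F. scaleC (c v) v)}"

definition cbounded :: "('a::complex_inner \<Rightarrow> 'a) \<Rightarrow> bool" where
  "cbounded B \<longleftrightarrow> (\<forall>x y. B (x + y) = B x + B y) \<and> (\<forall>c x. B (scaleC c x) = scaleC c (B x))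
      \<and> (\<exists>K. \<forall>x. norm (B x) \<le> K * norm x)"

definition wot_lim :: "(nat \<Rightarrow> 'a::complex_inner \<Rightarrow> 'a) \<Rightarrow> ('a \<Rightarrow> 'a) \<Rightarrow> bool" where
  "wot_lim B L \<longleftrightarrow> (\<forall>x y. (\<lambda>n. cinner x (B n y)) \<longlonglongrightarrow> cinner x (L y))"

text \<open>An element (h1, h2) of 'h \<times> 'h represents h1 + i h2 in the complexification.\<close>
type_synonym 'h hC = "'h \<times> 'h"

definition cinnerC :: "'h::real_inner hC \<Rightarrow> 'h hC \<Rightarrow> complex" where
  "cinnerC a b = Complex (fst a \<bullet> fst b + snd a \<bullet> snd b) (fst a \<bullet> snd b - snd a \<bullet> fst b)"

definition conjC :: "'h::real_inner hC \<Rightarrow> 'h hC" where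
  "conjC a = (fst a, - snd a)"

text \<open>E is the exponential-vector map of the symmetric Fock space over the
  complexification: the exponential vectors have the Fock inner products
  and are total.  This determines (H, E) up to a unique unitary.\<close>
definition fock_exp :: "('h::real_inner hC \<Rightarrow> 'f::complex_inner) \<Rightarrow> bool" where
  "fock_exp E \<longleftrightarrow> (\<forall>f g. cinner (E f) (E g) = exp (cinnerC f g))
      \<and> closure (cspan (range E)) = UNIV"

text \<open>Operators defined on exponential vectors are represented by their action
  g \<mapsto> T E(g).\<close>
definition adj_exp :: "('h::real_inner hC \<Rightarrow> 'f::complex_inner) \<Rightarrow> ('h hC \<Rightarrow> 'f) \<Rightarrow> 'h hC \<Rightarrow> 'f" where
  "adj_exp E T f = (THE v. \<forall>g. cinner v (E g) = cinner (E f) (T g))"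

definition ann :: "('h::real_inner hC \<Rightarrow> 'f::complex_inner) \<Rightarrow> 'h hC \<Rightarrow> 'h hC \<Rightarrow> 'f" where
  "ann E h g = scaleC (cinnerC h g) (E g)"

definition cre :: "('h::real_inner hC \<Rightarrow> 'f::complex_inner) \<Rightarrow> 'h hC \<Rightarrow> 'h hC \<Rightarrow> 'f" where
  "cre E h = adj_exp E (ann E h)"

definition fieldQ :: "('h::real_inner hC \<Rightarrow> 'f::complex_inner) \<Rightarrow> 'h hC \<Rightarrow> 'h hC \<Rightarrow> 'f" where
  "fieldQ E h g = ann E (conjC h) g + cre E h g"

definition fieldP :: "('h::real_inner hC \<Rightarrow> 'f::complex_inner) \<Rightarrow> 'h hC \<Rightarrow> 'h hC \<Rightarrow> 'f" where
  "fieldP E h g = scaleC \<i> (ann E (conjC h) g - cre E h g)"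

definition Xk :: "('h::real_inner hC \<Rightarrow> 'f::complex_inner) \<Rightarrow> 'h hC \<times> 'h hC \<Rightarrow> 'h hC \<Rightarrow> 'f" where
  "Xk E k g = fieldQ E (fst k) g - fieldP E (snd k) g"

text \<open>M is the bounded operator defined (in the paper's convention) by
  (i/2)[X_k, B] = (i/2)(X_k B 1 - 1 B X_k):
  \<langle>E f, M E g\<rangle> = (i/2)(\<langle>X_k* E f, B E g\<rangle> - \<langle>E f, B X_k E g\<rangle>).\<close>
definition is_Dk :: "('h::real_inner hC \<Rightarrow> 'f::complex_inner) \<Rightarrow> 'h hC \<times> 'h hC
    \<Rightarrow> ('f \<Rightarrow> 'f) \<Rightarrow> ('f \<Rightarrow> 'f) \<Rightarrow> bool" where
  "is_Dk E k B M \<longleftrightarrow> cbounded M \<and>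
     (\<forall>f g. cinner (E f) (M (E g)) =
        (\<i> / 2) * (cinner (adj_exp E (Xk E k) f) (B (E g)) - cinner (E f) (B (Xk E k g))))"

definition domD :: "('h::real_inner hC \<Rightarrow> 'f::complex_inner) \<Rightarrow> 'h hC \<times> 'h hC \<Rightarrow> ('f \<Rightarrow> 'f) set" where
  "domD E k = {B. cbounded B \<and> (\<exists>M. is_Dk E k B M)}"

definition Dk :: "('h::real_inner hC \<Rightarrow> 'f::complex_inner) \<Rightarrow> 'h hC \<times> 'h hC \<Rightarrow> ('f \<Rightarrow> 'f) \<Rightarrow> ('f \<Rightarrow> 'f)" where
  "Dk E k B = (THE M. is_Dk E k B M)"

end

theory Submission
  imports Defs
begin

text \<open>On exponential vectors the matrix coefficients of \<open>D\<^sub>k B\<close> are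
  \<open>(i/2)(\<langle>X\<^sub>k\<^sup>* E(f), B E(g)\<rangle> - \<langle>E(f), B X\<^sub>k E(g)\<rangle>)\<close>, i.e. a combination of two weak
  matrix coefficients of \<open>B\<close>.  Hence \<open>B\<^sub>n \<rightarrow> 0\<close> weakly forces every such coefficient
  of \<open>D\<^sub>k B\<^sub>n\<close> to tend to \<open>0\<close>, so all matrix coefficients of the weak limit \<open>\<beta>\<close>
  between exponential vectors vanish.  Since the exponential vectors are total and
  \<open>\<beta>\<close> is bounded, \<open>\<beta> = 0\<close>.\<close>

lemma cinner_zero_right [simp]: "cinner (x::'a::complex_inner) 0 = 0"
  using cinner_add_right[of x 0 0] by simp

lemma cinner_add_left: "cinner ((x::'a::complex_inner) + y) z = cinner x z + cinner y z"
  by (metis cinner_add_right cinner_commute complex_cnj_add)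

lemma cinner_zero_left [simp]: "cinner (0::'a::complex_inner) z = 0"
  using cinner_add_left[of 0 0 z] by simp

lemma cinner_scaleC_left: "cinner (scaleC c (x::'a::complex_inner)) y = cnj c * cinner x y"
  by (metis cinner_commute cinner_scaleC_right complex_cnj_cnj complex_cnj_mult)

lemma cinner_diff_right: "cinner (x::'a::complex_inner) (y - z) = cinner x y - cinner x z"
  by (metis add_diff_cancel_right' cinner_add_right diff_add_cancel eq_diff_eq)

lemma cinner_sum_left:
  "finite F \<Longrightarrow> cinner (sum f F) (w::'a::complex_inner) = (\<Sum>v\<in>F. cinner (f v) w)"
  by (induction F rule: finite_induct) (simp_all add: cinner_add_left)

lemma scaleC_zero_right [simp]: "scaleC c (0::'a::complex_inner) = 0"
  using scaleC_add_right[of c "0::'a" 0] by simp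

lemma Re_cinner_eq_norms:
  "Re (cinner (x::'a::complex_inner) w) = ((norm (x + w))\<^sup>2 - (norm x)\<^sup>2 - (norm w)\<^sup>2) / 2"
proof -
  have "cinner (x + w) (x + w) = cinner x x + cinner x w + cnj (cinner x w) + cinner w w"
    by (simp add: cinner_add_left cinner_add_right cinner_commute[of w x])
  then have "Re (cinner (x + w) (x + w)) = Re (cinner x x) + 2 * Re (cinner x w) + Re (cinner w w)"
    by simp
  then show ?thesis
    by (simp add: cinner_self_norm)
qed

lemma cinner_total_set_eq_zero:
  fixes w :: "'a::complex_inner"
  assumes total: "closure (cspan S) = UNIV" and orth: "\<forall>s\<in>S. cinner s w = 0"
  shows "w = 0"
proof -
  \<comment> \<open>The class gives no continuity of \<open>cinner\<close>; polarization expresses its real part by norms.\<close>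
  define Z where "Z = {x::'a. ((norm (x + w))\<^sup>2 - (norm x)\<^sup>2 - (norm w)\<^sup>2) / 2 = 0}"
  have "closed Z"
    unfolding Z_def by (intro closed_Collect_eq continuous_intros) auto
  moreover have "cspan S \<subseteq> Z"
  proof
    fix x assume "x \<in> cspan S"
    then obtain F c where "finite F" "F \<subseteq> S" "x = (\<Sum>v\<in>F. scaleC (c v) v)"
      unfolding cspan_def by blast
    with orth have "cinner x w = 0"
      by (auto simp: cinner_sum_left cinner_scaleC_left intro!: sum.neutral)
    then show "x \<in> Z"
      using Re_cinner_eq_norms[of x w] by (simp add: Z_def)
  qed
  ultimately have "w \<in> Z"
    using total closure_minimal by blast
  then have "Re (cinner w w) = 0"
    by (simp add: Z_def Re_cinner_eq_norms)
  then show ?thesis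
    by (simp add: cinner_self_norm)
qed

lemma cbounded_imp_bounded_linear:
  assumes "cbounded (T::'a::complex_inner \<Rightarrow> 'a)"
  shows "bounded_linear T"
proof -
  from assms obtain K where add: "\<And>x y. T (x + y) = T x + T y"
    and scale: "\<And>c x. T (scaleC c x) = scaleC c (T x)" and K: "\<And>x. norm (T x) \<le> K * norm x"
    unfolding cbounded_def by blast
  show ?thesis
  proof (rule bounded_linear_intro[where K=K])
    show "T (scaleR r x) = scaleR r (T x)" for r x
      by (simp add: scaleR_scaleC scale)
    show "norm (T x) \<le> norm x * K" for x
      using K[of x] by (simp add: mult.commute)
  qed (rule add)
qed

lemma cbounded_cspan_combination:
  assumes "cbounded T" "finite F"
  shows "T (\<Sum>v\<in>F. scaleC (c v) v) = (\<Sum>v\<in>F. scaleC (c v) (T v))"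
proof -
  have "T (\<Sum>v\<in>F. scaleC (c v) v) = (\<Sum>v\<in>F. T (scaleC (c v) v))"
    using linear_sum[OF bounded_linear.linear[OF cbounded_imp_bounded_linear[OF assms(1)]]] by blast
  also have "\<dots> = (\<Sum>v\<in>F. scaleC (c v) (T v))"
    using assms(1) by (simp add: cbounded_def)
  finally show ?thesis .
qed

lemma cbounded_zero: "cbounded (\<lambda>x::'a::complex_inner. 0)"
  unfolding cbounded_def by (intro conjI allI exI[of _ 0]) simp_all

lemma cbounded_eqI_total_set:
  fixes T1 T2 :: "'a::complex_inner \<Rightarrow> 'a"
  assumes total: "closure (cspan S) = UNIV"
    and T1: "cbounded T1" and T2: "cbounded T2"
    and coeff: "\<forall>s\<in>S. \<forall>t\<in>S. cinner s (T1 t) = cinner s (T2 t)"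
  shows "T1 = T2"
proof -
  have on_S: "T1 t = T2 t" if "t \<in> S" for t
    using cinner_total_set_eq_zero[OF total, of "T1 t - T2 t"] coeff that
    by (simp add: cinner_diff_right)
  have "closed {x. T1 x = T2 x}"
    by (intro closed_Collect_eq linear_continuous_on cbounded_imp_bounded_linear T1 T2)
  moreover have "cspan S \<subseteq> {x. T1 x = T2 x}"
  proof
    fix x assume "x \<in> cspan S"
    then obtain F c where F: "finite F" "F \<subseteq> S" and x: "x = (\<Sum>v\<in>F. scaleC (c v) v)"
      unfolding cspan_def by blast
    have "T1 x = (\<Sum>v\<in>F. scaleC (c v) (T1 v))"
      using x F T1 by (simp add: cbounded_cspan_combination)
    also have "\<dots> = (\<Sum>v\<in>F. scaleC (c v) (T2 v))"
      using F on_S by (intro sum.cong) auto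
    also have "\<dots> = T2 x"
      using x F T2 by (simp add: cbounded_cspan_combination)
    finally show "x \<in> {x. T1 x = T2 x}" by simp
  qed
  ultimately have "UNIV \<subseteq> {x. T1 x = T2 x}"
    using total closure_minimal by metis
  then show ?thesis
    by auto
qed

lemma is_Dk_coeff:
  "is_Dk E k B M \<Longrightarrow> cinner (E f) (M (E g)) =
     (\<i> / 2) * (cinner (adj_exp E (Xk E k) f) (B (E g)) - cinner (E f) (B (Xk E k g)))"
  unfolding is_Dk_def by blast

lemma is_Dk_unique:
  assumes "fock_exp E" "is_Dk E k B M1" "is_Dk E k B M2"
  shows "M1 = M2"
  using assms(1) unfolding fock_exp_def
  by (intro cbounded_eqI_total_set[of "range E"])
     (use assms(2,3) in \<open>auto simp: is_Dk_def is_Dk_coeff[OF assms(2)] is_Dk_coeff[OF assms(3)]\<close>)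

lemma is_Dk_Dk:
  assumes "fock_exp E" "B \<in> domD E k"
  shows "is_Dk E k B (Dk E k B)"
proof -
  from assms(2) obtain M where "is_Dk E k B M"
    unfolding domD_def by blast
  then have "\<exists>!M. is_Dk E k B M"
    using is_Dk_unique[OF assms(1)] by blast
  then show ?thesis
    unfolding Dk_def by (rule theI')
qed

lemma Dk_coeff_tendsto_zero:
  assumes "fock_exp E" "\<forall>n. B n \<in> domD E k" "wot_lim B (\<lambda>x. 0)"
  shows "(\<lambda>n. cinner (E f) (Dk E k (B n) (E g))) \<longlonglongrightarrow> 0"
proof -
  let ?Xf = "adj_exp E (Xk E k) f"
  have "(\<lambda>n. cinner ?Xf (B n (E g))) \<longlonglongrightarrow> 0" "(\<lambda>n. cinner (E f) (B n (Xk E k g))) \<longlonglongrightarrow> 0"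
    using assms(3) unfolding wot_lim_def by (metis cinner_zero_right)+
  then have "(\<lambda>n. (\<i> / 2) * (cinner ?Xf (B n (E g)) - cinner (E f) (B n (Xk E k g)))) \<longlonglongrightarrow> (\<i> / 2) * (0 - 0)"
    by (intro tendsto_intros)
  moreover have "(\<lambda>n. cinner (E f) (Dk E k (B n) (E g))) =
      (\<lambda>n. (\<i> / 2) * (cinner ?Xf (B n (E g)) - cinner (E f) (B n (Xk E k g))))"
    using is_Dk_coeff[OF is_Dk_Dk[OF assms(1)]] assms(2) by blast
  ultimately show ?thesis
    by simp
qed

theorem proposition5p4:
  fixes E :: "'h::{real_inner, polish_space} hC \<Rightarrow> 'f::{complex_inner, complete_space}"
    and k :: "'h hC \<times> 'h hC"
    and B :: "nat \<Rightarrow> 'f \<Rightarrow> 'f"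
    and \<beta> :: "'f \<Rightarrow> 'f"
  assumes "fock_exp E"
    and "\<forall>n. B n \<in> domD E k"
    and "wot_lim B (\<lambda>x. 0)"
    and "cbounded \<beta>"
    and "wot_lim (\<lambda>n. Dk E k (B n)) \<beta>"
  shows "\<beta> = (\<lambda>x. 0)"
proof -
  have "cinner (E f) (\<beta> (E g)) = 0" for f g
  proof (rule LIMSEQ_unique)
    show "(\<lambda>n. cinner (E f) (Dk E k (B n) (E g))) \<longlonglongrightarrow> cinner (E f) (\<beta> (E g))"
      using assms(5) unfolding wot_lim_def by blast
    show "(\<lambda>n. cinner (E f) (Dk E k (B n) (E g))) \<longlonglongrightarrow> 0"
      using Dk_coeff_tendsto_zero[OF assms(1-3)] .
  qed
  then show ?thesis
    using assms(1) unfolding fock_exp_def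
    by (intro cbounded_eqI_total_set[OF _ assms(4) cbounded_zero]) auto
qed

end
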